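(* Let $(D,D_{t'})$ be a proper pair (with $t'\geq 1$) such that the unrolled DAG $D_{t'}$ has no contemporaneous edges, and assume that the $d$-separation Markov property holds in $D_{t'}$ for the time series with baseline variables $X$ with index sets $(V,W)$. Let $A,B,C\subseteq V\cup W$ be pairwise disjoint with $B\subseteq V$. If $B$ is $\delta$-separated from $A$ given $C$ in $D$, then $X^B$ is locally independent of $X^A$ given $X^C$ until time $t'$.
   Context: Time series with baseline variables: $V$ and $W$ are finite disjoint index sets. $X=\{X_t\}_{t\ge 0}$ is a stochastic process such that $X_0$ is a random vector with entries indexed by $V\cup W$ (coordinate processes at time $0$ together with baseline variables) and, for $t\geq 1$, $X_t$ is a random vector with entries indexed by $V$. For $A\subseteq V\cup W$, $X_t^A$ is the subvector indexed by $A$ and $\overline X_t^A=\{X_s^i: i\in A, s\le t\}$ (a baseline variable $i\in W$ only appears at $s=0$). Local independence (Granger non-causality): for pairwise disjoint $A,B,C\subseteq V\cup W$ with $B\subseteq V$, $X^B$ is locally independent of $X^A$ given $X^C$ until time $t'$ if for every $t=1,\dots,t'$, $\overline X^A_{t-1}$ and $X^B_t$ are conditionally independent given $\overline X^{B\cup C}_{t-1}$. Graphs: a directed graph (DG) has node set and directed edges $i\to j$ (at most one edge from $i$ to $j$; both $i\to j$ and $j\to i$ may occur; self-loops allowed). A walk is an alternating sequence of nodes and edges with each edge between consecutive nodes; a path is a walk with no repeated node. A non-endpoint node $k$ on a path is a collider if both adjacent edges have heads at $k$ ($\to k\leftarrow$), otherwise a noncollider. $\mathrm{an}(C)$ is the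 set of nodes $k$ having a directed path to some node of $C$ with $k\ne$ that node; $\mathrm{an}^{+}(C)=\mathrm{an}(C)\cup C$. A DAG is a DG without directed cycles. $\delta$-separation: for a DG $D$ on $V\cup W$ and $B\subseteq V\cup W$, $D^B$ is obtained from $D$ by deleting every edge $i\to j$ with $i\in B$. For disjoint $A,B,C$, $B$ is $\delta$-separated from $A$ given $C$ in $D$ if every path in $D^B$ between a node of $A$ and a node of $B$ contains a noncollider in $C$ or a collider not in $\mathrm{an}_D(C)\cup C$ (ancestors computed in $D$). $d$-separation in a DAG is the same condition applied to paths in the DAG itself (no edge deletion), and is symmetric. Unrolling: for a DG $D$ on $V\cup W$ ($W$ = baseline nodes), its unrolled version on $t'$ lags is the DAG $D_{t'}$ on nodes $V^{t'}\cup W^{t'}$, $V^{t'}=\bigcup_{i\in V}\{\nu_0^i,\dots,\nu_{t'}^i\}$, $W^{t'}=\{\nu_0^i:i\in W\}$, with $\nu_s^i\to\nu_t^j$ iff $s<t$ and $i\to j$ in $D$. Rolling: for a DAG $D_{t'}$ on such a node set, its rolled version is the DG $D$ on $V\cup W$ with $i\to j$ iff $\nu_s^i\to\nu_t^j$ in $D_{t'}$ for some $s<t$. An edge $\nu_s^i\to\nu_t^j$ is contemporaneous if $s=t$. The pair $(D,D_{t'})$ is proper if $D$ is the rolled version of $D_{t'}$ or $D_{t'}$ is the unrolled version of $D$. Node $\nu_s^i$ represents the random variable $X_s^i$; for a node set $a$, $x^a$ is the corresponding set of variables; $\nu_t^A=\{\nu_t^i:i\in A\}$, $\bar\nu_t^A=\{\nu_s^i:i\in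 A,s\le t\}$. The $d$-separation Markov property holds in $D_{t'}$ if for all disjoint node sets $a,b,c$, $a$ and $b$ $d$-separated by $c$ in $D_{t'}$ implies $x^a$ and $x^b$ conditionally independent given $x^c$. *)

theory Defs
  imports "HOL-Probability.Probability"
begin

text \<open>A directed graph is an edge set E (pairs (i,j) meaning i -> j).
  A path is a nonempty list of distinct nodes ns together with a list of
  orientations ds: ds!k = True means the k-th edge is ns!k -> ns!(k+1),
  ds!k = False means it is ns!(k+1) -> ns!k.\<close>

definition is_path :: "('n \<times> 'n) set \<Rightarrow> 'n list \<Rightarrow> bool list \<Rightarrow> bool" where
  "is_path E ns ds \<longleftrightarrow> ns \<noteq> [] \<and> distinct ns \<and> length ds = length ns - 1 \<and>
     (\<forall>k < length ds. if ds ! k then (ns ! k, ns ! Suc k) \<in> E else (ns ! Suc k, ns ! k) \<in> E)"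

text \<open>Non-endpoint position k (0 < k < length ns - 1) is a collider iff both
  adjacent edges point into ns!k.\<close>
definition is_collider :: "bool list \<Rightarrow> nat \<Rightarrow> bool" where
  "is_collider ds k \<longleftrightarrow> ds ! (k - 1) \<and> \<not> ds ! k"

definition anc :: "('n \<times> 'n) set \<Rightarrow> 'n set \<Rightarrow> 'n set" where
  "anc E C = {k. \<exists>c\<in>C. k \<noteq> c \<and> (k, c) \<in> E\<^sup>+}"

definition blocked :: "('n \<times> 'n) set \<Rightarrow> 'n set \<Rightarrow> 'n list \<Rightarrow> bool list \<Rightarrow> bool" where
  "blocked E C ns ds \<longleftrightarrow> (\<exists>k. 0 < k \<and> k < length ns - 1 \<and>
      ((\<not> is_collider ds k \<and> ns ! k \<in> C) \<or>
       (is_collider ds k \<and> ns ! k \<notin> anc E C \<union> C)))"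

definition del_out :: "('n \<times> 'n) set \<Rightarrow> 'n set \<Rightarrow> ('n \<times> 'n) set" where
  "del_out E B = {(i, j) \<in> E. i \<notin> B}"

definition delta_sep :: "('n \<times> 'n) set \<Rightarrow> 'n set \<Rightarrow> 'n set \<Rightarrow> 'n set \<Rightarrow> bool" where
  "delta_sep E A B C \<longleftrightarrow> (\<forall>ns ds. is_path (del_out E B) ns ds \<and>
      ((hd ns \<in> A \<and> last ns \<in> B) \<or> (hd ns \<in> B \<and> last ns \<in> A)) \<longrightarrow> blocked E C ns ds)"

definition d_sep :: "('n \<times> 'n) set \<Rightarrow> 'n set \<Rightarrow> 'n set \<Rightarrow> 'n set \<Rightarrow> bool" where
  "d_sep E a b c \<longleftrightarrow> (\<forall>ns ds. is_path E ns ds \<and>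
      ((hd ns \<in> a \<and> last ns \<in> b) \<or> (hd ns \<in> b \<and> last ns \<in> a)) \<longrightarrow> blocked E c ns ds)"

text \<open>Node nu_s^i is represented by the pair (i, s).
  Node set V^t' \<union> W^t'.\<close>
definition unrolled_nodes :: "'v set \<Rightarrow> 'v set \<Rightarrow> nat \<Rightarrow> ('v \<times> nat) set" where
  "unrolled_nodes V W t' = {(i, s). i \<in> V \<and> s \<le> t'} \<union> {(i, 0) | i. i \<in> W}"

definition is_DG_on :: "'v set \<Rightarrow> ('v \<times> 'v) set \<Rightarrow> bool" where
  "is_DG_on N E \<longleftrightarrow> E \<subseteq> N \<times> N"

definition is_unrolled_DAG :: "'v set \<Rightarrow> 'v set \<Rightarrow> nat \<Rightarrow> (('v \<times> nat) \<times> ('v \<times> nat)) set \<Rightarrow> bool" where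
  "is_unrolled_DAG V W t' Et \<longleftrightarrow> Et \<subseteq> unrolled_nodes V W t' \<times> unrolled_nodes V W t' \<and>
     (\<forall>i s j t. ((i, s), (j, t)) \<in> Et \<longrightarrow> s \<le> t) \<and> acyclic Et"

definition unroll :: "'v set \<Rightarrow> 'v set \<Rightarrow> nat \<Rightarrow> ('v \<times> 'v) set \<Rightarrow> (('v \<times> nat) \<times> ('v \<times> nat)) set" where
  "unroll V W t' E = {((i, s), (j, t)). (i, s) \<in> unrolled_nodes V W t' \<and>
      (j, t) \<in> unrolled_nodes V W t' \<and> s < t \<and> (i, j) \<in> E}"

definition roll :: "(('v \<times> nat) \<times> ('v \<times> nat)) set \<Rightarrow> ('v \<times> 'v) set" where
  "roll Et = {(i, j). \<exists>s t. s < t \<and> ((i, s), (j, t)) \<in> Et}"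

definition proper_pair :: "'v set \<Rightarrow> 'v set \<Rightarrow> nat \<Rightarrow> ('v \<times> 'v) set \<Rightarrow> (('v \<times> nat) \<times> ('v \<times> nat)) set \<Rightarrow> bool" where
  "proper_pair V W t' E Et \<longleftrightarrow> is_DG_on (V \<union> W) E \<and> is_unrolled_DAG V W t' Et \<and>
     (E = roll Et \<or> Et = unroll V W t' E)"

definition no_contemporaneous :: "(('v \<times> nat) \<times> ('v \<times> nat)) set \<Rightarrow> bool" where
  "no_contemporaneous Et \<longleftrightarrow> (\<forall>i j s. ((i, s), (j, s)) \<notin> Et)"

definition gen_sigma :: "'a measure \<Rightarrow> ('n \<Rightarrow> 'a \<Rightarrow> real) \<Rightarrow> 'n set \<Rightarrow> 'a measure" where
  "gen_sigma M Y a = sigma (space M) (\<Union>n\<in>a. {Y n -` S \<inter> space M | S. S \<in> sets borel})"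

definition cond_indep :: "'a measure \<Rightarrow> ('n \<Rightarrow> 'a \<Rightarrow> real) \<Rightarrow> 'n set \<Rightarrow> 'n set \<Rightarrow> 'n set \<Rightarrow> bool" where
  "cond_indep M Y a b c \<longleftrightarrow>
     (\<forall>E \<in> sets (gen_sigma M Y a). \<forall>F \<in> sets (gen_sigma M Y b).
        AE \<omega> in M. real_cond_exp M (gen_sigma M Y c) (indicator (E \<inter> F)) \<omega> =
          real_cond_exp M (gen_sigma M Y c) (indicator E) \<omega> *
          real_cond_exp M (gen_sigma M Y c) (indicator F) \<omega>)"

text \<open>X i s is the random variable X_s^i; meaningful for (i,s) in the unrolled node set
  (baseline variables i \<in> W only at s = 0).\<close>
definition time_series :: "'a measure \<Rightarrow> 'v set \<Rightarrow> 'v set \<Rightarrow> ('v \<Rightarrow> nat \<Rightarrow> 'a \<Rightarrow> real) \<Rightarrow> bool" where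
  "time_series M V W X \<longleftrightarrow> prob_space M \<and> finite V \<and> finite W \<and> V \<inter> W = {} \<and>
     (\<forall>i s. (i \<in> V \<or> (i \<in> W \<and> s = 0)) \<longrightarrow> X i s \<in> borel_measurable M)"

definition node_var :: "('v \<Rightarrow> nat \<Rightarrow> 'a \<Rightarrow> real) \<Rightarrow> 'v \<times> nat \<Rightarrow> 'a \<Rightarrow> real" where
  "node_var X n = X (fst n) (snd n)"

definition dsep_markov :: "'a measure \<Rightarrow> 'v set \<Rightarrow> 'v set \<Rightarrow> nat \<Rightarrow> ('v \<Rightarrow> nat \<Rightarrow> 'a \<Rightarrow> real)
    \<Rightarrow> (('v \<times> nat) \<times> ('v \<times> nat)) set \<Rightarrow> bool" where
  "dsep_markov M V W t' X Et \<longleftrightarrow>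
     (\<forall>a b c. a \<subseteq> unrolled_nodes V W t' \<and> b \<subseteq> unrolled_nodes V W t' \<and> c \<subseteq> unrolled_nodes V W t' \<and>
        a \<inter> b = {} \<and> a \<inter> c = {} \<and> b \<inter> c = {} \<and> d_sep Et a b c \<longrightarrow>
        cond_indep M (node_var X) a b c)"

definition past_nodes :: "'v set \<Rightarrow> 'v set \<Rightarrow> 'v set \<Rightarrow> nat \<Rightarrow> ('v \<times> nat) set" where
  "past_nodes V W A t = {(i, s) \<in> unrolled_nodes V W t. i \<in> A}"

definition now_nodes :: "'v set \<Rightarrow> nat \<Rightarrow> ('v \<times> nat) set" where
  "now_nodes B t = {(i, t) | i. i \<in> B}"

definition locally_indep :: "'a measure \<Rightarrow> 'v set \<Rightarrow> 'v set \<Rightarrow> ('v \<Rightarrow> nat \<Rightarrow> 'a \<Rightarrow> real)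
    \<Rightarrow> 'v set \<Rightarrow> 'v set \<Rightarrow> 'v set \<Rightarrow> nat \<Rightarrow> bool" where
  "locally_indep M V W X A B C t' \<longleftrightarrow>
     (\<forall>t \<in> {1..t'}. cond_indep M (node_var X) (past_nodes V W A (t - 1)) (now_nodes B t)
        (past_nodes V W (B \<union> C) (t - 1)))"

end

theory Submission
  imports Defs
begin

text \<open>Suppose a path in the unrolled graph between the past of A up to time t - 1 and B at
  time t is open given the past of B \<union> C. All edges point forward in time and the conditioning
  set lies before t, so every node but the endpoint at time t lies before t (a latest node
  would be a collider without descendants in the conditioning set); in particular the last
  edge points into B. Projecting onto D gives a walk in D^B from A to B whose noncolliders
  avoid B \<union> C and whose colliders are ancestors of B \<union> C. Cut it at the first node that is in B
  or is a collider outside an(C) \<union> C; in the latter case the node is an ancestor of B, and a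
  directed path into B can be appended. The result is a walk in D^B open given C, and removing
  loops turns it into a path, contradicting \<delta>-separation. The d-separation Markov property
  then yields each required conditional independence.\<close>

definition is_walk :: "('n \<times> 'n) set \<Rightarrow> 'n list \<Rightarrow> bool list \<Rightarrow> bool" where
  "is_walk G ns ds \<longleftrightarrow> ns \<noteq> [] \<and> length ds = length ns - 1 \<and>
     (\<forall>k < length ds. if ds ! k then (ns ! k, ns ! Suc k) \<in> G else (ns ! Suc k, ns ! k) \<in> G)"

definition d_connecting :: "('n \<times> 'n) set \<Rightarrow> 'n set \<Rightarrow> 'n list \<Rightarrow> bool list \<Rightarrow> bool" where
  "d_connecting E C ns ds \<longleftrightarrow> (\<forall>k. 0 < k \<and> k < length ns - 1 \<longrightarrow>
     (\<not> is_collider ds k \<longrightarrow> ns ! k \<notin> C) \<and> (is_collider ds k \<longrightarrow> ns ! k \<in> anc E C \<union> C))"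

lemma is_path_iff_walk_distinct: "is_path G ns ds \<longleftrightarrow> is_walk G ns ds \<and> distinct ns"
  by (auto simp: is_path_def is_walk_def)

lemma blocked_iff_not_d_connecting: "blocked E C ns ds \<longleftrightarrow> \<not> d_connecting E C ns ds"
  by (auto simp: blocked_def d_connecting_def)

lemma is_walkD:
  assumes "is_walk G ns ds"
  shows "ns \<noteq> []" "length ds = length ns - 1"
  using assms by (auto simp: is_walk_def)

lemma is_walk_edge:
  assumes "is_walk G ns ds" "k < length ds"
  shows "if ds ! k then (ns ! k, ns ! Suc k) \<in> G else (ns ! Suc k, ns ! k) \<in> G"
  using assms by (auto simp: is_walk_def)

lemma d_connectingD:
  assumes "d_connecting E C ns ds" "0 < k" "k < length ns - 1"
  shows "\<not> is_collider ds k \<Longrightarrow> ns ! k \<notin> C" "is_collider ds k \<Longrightarrow> ns ! k \<in> anc E C \<union> C"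
  using assms by (auto simp: d_connecting_def)

lemma anc_Un_rtrancl_closed:
  assumes "(x, y) \<in> E\<^sup>*" "y \<in> anc E C \<union> C"
  shows "x \<in> anc E C \<union> C"
proof (cases "x = y")
  case False
  then have xy: "(x, y) \<in> E\<^sup>+" using assms(1) by (meson rtranclD)
  from assms(2) obtain c where "c \<in> C" "(y, c) \<in> E\<^sup>*"
    by (auto simp: anc_def dest: trancl_into_rtrancl)
  with xy have "(x, c) \<in> E\<^sup>+" by simp
  then show ?thesis using \<open>c \<in> C\<close> by (cases "x = c") (auto simp: anc_def)
qed (use assms in simp)

lemma trancl_image:
  assumes "(x, y) \<in> G\<^sup>+" "\<And>u v. (u, v) \<in> G \<Longrightarrow> (f u, f v) \<in> E"
  shows "(f x, f y) \<in> E\<^sup>+"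
  using assms(1)
proof induction
  case (base y)
  then show ?case using assms(2) by blast
next
  case (step y z)
  then show ?case using assms(2) by (meson trancl_into_trancl)
qed

lemma is_walk_map:
  assumes "is_walk G ns ds" "\<And>u v. (u, v) \<in> G \<Longrightarrow> (f u, f v) \<in> E"
  shows "is_walk E (map f ns) ds"
  unfolding is_walk_def
proof (intro conjI allI impI)
  note w = is_walkD[OF assms(1)]
  show "map f ns \<noteq> []" "length ds = length (map f ns) - 1" using w by auto
  fix k assume k: "k < length ds"
  then have "map f ns ! k = f (ns ! k)" "map f ns ! Suc k = f (ns ! Suc k)" using w by auto
  then show "if ds ! k then (map f ns ! k, map f ns ! Suc k) \<in> E else (map f ns ! Suc k, map f ns ! k) \<in> E"
    using is_walk_edge[OF assms(1) k] assms(2) by (auto split: if_splits)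
qed

lemma is_walk_del_out:
  assumes "is_walk E ns ds"
    and "\<And>k. k < length ds \<Longrightarrow> ds ! k \<Longrightarrow> ns ! k \<notin> B"
    and "\<And>k. k < length ds \<Longrightarrow> \<not> ds ! k \<Longrightarrow> ns ! Suc k \<notin> B"
  shows "is_walk (del_out E B) ns ds"
  using assms by (auto simp: is_walk_def del_out_def split: if_splits)

lemma append_tl_nth:
  assumes "ns1 \<noteq> []" "ns2 \<noteq> []" "last ns1 = hd ns2" "m < length ns2"
  shows "(ns1 @ tl ns2) ! (length ns1 - 1 + m) = ns2 ! m"
proof (cases m)
  case 0
  then show ?thesis using assms by (simp add: nth_append last_conv_nth hd_conv_nth)
next
  case (Suc m')
  obtain x xs where "ns1 = x # xs" using assms by (cases ns1) auto
  then show ?thesis using assms Suc by (simp add: nth_append nth_tl)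
qed

lemma last_append_tl: "ns2 \<noteq> [] \<Longrightarrow> last ns1 = hd ns2 \<Longrightarrow> last (ns1 @ tl ns2) = last ns2"
  by (cases ns2) auto

lemma is_walk_append:
  assumes w1: "is_walk G ns1 ds1" and w2: "is_walk G ns2 ds2" and j: "last ns1 = hd ns2"
  shows "is_walk G (ns1 @ tl ns2) (ds1 @ ds2)"
  unfolding is_walk_def
proof (intro conjI allI impI)
  note l1 = is_walkD[OF w1] and l2 = is_walkD[OF w2]
  show "ns1 @ tl ns2 \<noteq> []" using l1 by simp
  show "length (ds1 @ ds2) = length (ns1 @ tl ns2) - 1" using l1 l2 by (cases ns1; cases ns2) auto
  fix k assume k: "k < length (ds1 @ ds2)"
  show "if (ds1 @ ds2) ! k then ((ns1 @ tl ns2) ! k, (ns1 @ tl ns2) ! Suc k) \<in> G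
        else ((ns1 @ tl ns2) ! Suc k, (ns1 @ tl ns2) ! k) \<in> G"
  proof (cases "k < length ds1")
    case True
    then have "(ds1 @ ds2) ! k = ds1 ! k" "(ns1 @ tl ns2) ! k = ns1 ! k"
      "(ns1 @ tl ns2) ! Suc k = ns1 ! Suc k" using l1 by (auto simp: nth_append)
    then show ?thesis using is_walk_edge[OF w1 True] by simp
  next
    case False
    define m where "m = k - length ds1"
    have km: "k = length ns1 - 1 + m" and m: "m < length ds2" using False k l1 m_def by auto
    have "(ds1 @ ds2) ! k = ds2 ! m" using False m_def by (simp add: nth_append)
    moreover have "(ns1 @ tl ns2) ! k = ns2 ! m" "(ns1 @ tl ns2) ! Suc k = ns2 ! Suc m"
      using append_tl_nth[OF l1(1) l2(1) j, of m] append_tl_nth[OF l1(1) l2(1) j, of "Suc m"] km m l2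
      by (simp_all add: Suc_diff_1)
    ultimately show ?thesis using is_walk_edge[OF w2 m] by simp
  qed
qed

lemma d_connecting_append:
  assumes w1: "is_walk G ns1 ds1" and w2: "is_walk G ns2 ds2" and j: "last ns1 = hd ns2"
    and c1: "d_connecting E C ns1 ds1" and c2: "d_connecting E C ns2 ds2"
    and junction: "ds1 \<noteq> [] \<Longrightarrow> ds2 \<noteq> [] \<Longrightarrow>
      (if last ds1 \<and> \<not> hd ds2 then hd ns2 \<in> anc E C \<union> C else hd ns2 \<notin> C)"
  shows "d_connecting E C (ns1 @ tl ns2) (ds1 @ ds2)"
  unfolding d_connecting_def
proof (intro allI impI)
  note l1 = is_walkD[OF w1] and l2 = is_walkD[OF w2]
  let ?ns = "ns1 @ tl ns2" and ?ds = "ds1 @ ds2"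
  fix k assume "0 < k \<and> k < length ?ns - 1"
  then have k0: "0 < k" and kl: "k < length ds1 + length ds2" using l1 l2 by (cases ns2; auto)+
  consider "k < length ds1" | "k = length ds1" | "length ds1 < k" by linarith
  then show "(\<not> is_collider ?ds k \<longrightarrow> ?ns ! k \<notin> C) \<and> (is_collider ?ds k \<longrightarrow> ?ns ! k \<in> anc E C \<union> C)"
  proof cases
    case 1
    then have "?ns ! k = ns1 ! k" "is_collider ?ds k = is_collider ds1 k"
      using l1 k0 by (auto simp: nth_append is_collider_def)
    then show ?thesis using d_connectingD[OF c1 k0] 1 l1 by auto
  next
    case 2
    then have dne: "ds1 \<noteq> []" "ds2 \<noteq> []" using k0 kl by auto
    have "?ns ! k = hd ns2" using append_tl_nth[OF l1(1) l2(1) j, of 0] 2 l1 l2 by (simp add: hd_conv_nth)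
    moreover have "is_collider ?ds k = (last ds1 \<and> \<not> hd ds2)"
      using 2 dne by (simp add: is_collider_def nth_append last_conv_nth hd_conv_nth)
    ultimately show ?thesis using junction[OF dne] by (auto split: if_splits)
  next
    case 3
    define m where "m = k - length ds1"
    have m0: "0 < m" and km: "k = length ns1 - 1 + m" using 3 l1 m_def by auto
    have ml: "m < length ns2 - 1" using 3 kl l2 m_def by arith
    have "?ns ! k = ns2 ! m" using append_tl_nth[OF l1(1) l2(1) j, of m] km ml by simp
    moreover have "is_collider ?ds k = is_collider ds2 m"
      using 3 m_def m0 by (auto simp: nth_append is_collider_def)
    ultimately show ?thesis using d_connectingD[OF c2 m0 ml] by auto
  qed
qed

lemma is_walk_take: "is_walk G ns ds \<Longrightarrow> k < length ns \<Longrightarrow> is_walk G (take (Suc k) ns) (take k ds)"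
  by (auto simp: is_walk_def)

lemma is_walk_drop: "is_walk G ns ds \<Longrightarrow> k < length ns \<Longrightarrow> is_walk G (drop k ns) (drop k ds)"
  by (auto simp: is_walk_def add.commute)

lemma d_connecting_take:
  "d_connecting E C ns ds \<Longrightarrow> is_walk G ns ds \<Longrightarrow> k < length ns \<Longrightarrow>
    d_connecting E C (take (Suc k) ns) (take k ds)"
  by (auto simp: d_connecting_def is_walk_def is_collider_def)

lemma d_connecting_drop:
  assumes "d_connecting E C ns ds" "is_walk G ns ds"
  shows "d_connecting E C (drop k ns) (drop k ds)"
  unfolding d_connecting_def
proof (intro allI impI)
  fix j assume j: "0 < j \<and> j < length (drop k ns) - 1"
  then have "0 < k + j" "k + j < length ns - 1" by auto
  moreover have "is_collider (drop k ds) j = is_collider ds (k + j)"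
    using j is_walkD[OF assms(2)] by (auto simp: is_collider_def)
  ultimately show "(\<not> is_collider (drop k ds) j \<longrightarrow> drop k ns ! j \<notin> C) \<and>
      (is_collider (drop k ds) j \<longrightarrow> drop k ns ! j \<in> anc E C \<union> C)"
    using d_connectingD[OF assms(1)] j by auto
qed

lemma is_walk_rev:
  assumes "is_walk G ns ds"
  shows "is_walk G (rev ns) (rev (map Not ds))"
  unfolding is_walk_def
proof (intro conjI allI impI)
  note l = is_walkD[OF assms]
  show "rev ns \<noteq> []" "length (rev (map Not ds)) = length (rev ns) - 1" using l by auto
  fix k assume k: "k < length (rev (map Not ds))"
  define i where "i = length ds - 1 - k"
  have i: "i < length ds" using k i_def by auto
  have "rev (map Not ds) ! k = (\<not> ds ! i)" "rev ns ! k = ns ! Suc i" "rev ns ! Suc k = ns ! i"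
    using k i_def l by (auto simp: rev_nth Suc_diff_Suc)
  then show "if rev (map Not ds) ! k then (rev ns ! k, rev ns ! Suc k) \<in> G
      else (rev ns ! Suc k, rev ns ! k) \<in> G" using is_walk_edge[OF assms i] by auto
qed

lemma d_connecting_rev:
  assumes "is_walk G ns ds" "d_connecting E C ns ds"
  shows "d_connecting E C (rev ns) (rev (map Not ds))"
  unfolding d_connecting_def
proof (intro allI impI)
  note l = is_walkD[OF assms(1)]
  fix k assume k: "0 < k \<and> k < length (rev ns) - 1"
  define i where "i = length ns - 1 - k"
  have i: "0 < i" "i < length ns - 1" using k i_def by auto
  have "rev ns ! k = ns ! i" using k i_def by (auto simp: rev_nth)
  moreover have "is_collider (rev (map Not ds)) k = is_collider ds i"
    using k i_def l by (auto simp: is_collider_def rev_nth Suc_diff_Suc)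
  ultimately show "(\<not> is_collider (rev (map Not ds)) k \<longrightarrow> rev ns ! k \<notin> C) \<and>
      (is_collider (rev (map Not ds)) k \<longrightarrow> rev ns ! k \<in> anc E C \<union> C)"
    using d_connectingD[OF assms(2) i] by auto
qed

text \<open>Following the forward edges from position p one reaches a collider, which lies in
  anc C \<union> C, and so does every node along the way.\<close>
lemma d_connecting_forward_anc:
  assumes "is_walk G ns ds" "G \<subseteq> E" "d_connecting E C ns ds"
    and "p < j" "j < length ds" "ds ! p" "\<not> ds ! j"
  shows "ns ! p \<in> anc E C \<union> C"
  using assms
proof (induction "j - p" arbitrary: p)
  case 0
  then show ?case by simp
next
  case (Suc d)
  note l = is_walkD[OF Suc.prems(1)]
  have "(ns ! p, ns ! Suc p) \<in> E" using is_walk_edge[OF Suc.prems(1), of p] Suc.prems by auto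
  moreover have "ns ! Suc p \<in> anc E C \<union> C"
  proof (cases "ds ! Suc p")
    case True
    then have "Suc p < j" using Suc.prems by (cases "Suc p = j") auto
    then show ?thesis using Suc.hyps Suc.prems True by auto
  next
    case False
    then have "is_collider ds (Suc p)" using Suc.prems by (simp add: is_collider_def)
    then show ?thesis using d_connectingD(2)[OF Suc.prems(3)] Suc.prems l by auto
  qed
  ultimately show ?case using anc_Un_rtrancl_closed by (metis r_into_rtrancl)
qed

lemma last_take_Suc: "k < length ns \<Longrightarrow> last (take (Suc k) ns) = ns ! k"
  by (simp add: take_Suc_conv_app_nth)

text \<open>If the junction becomes a collider, either position p already was one, or the edge
  leaving p is forward and the edge leaving q backward, and the previous lemma applies.\<close>
lemma d_connecting_cut_loop:
  assumes w: "is_walk G ns ds" and "G \<subseteq> E" and c: "d_connecting E C ns ds"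
    and pq: "p < q" "q < length ns" "ns ! p = ns ! q"
  shows "d_connecting E C (take (Suc p) ns @ tl (drop q ns)) (take p ds @ drop q ds)"
proof (rule d_connecting_append)
  note l = is_walkD[OF w]
  show "last (take (Suc p) ns) = hd (drop q ns)" using pq by (simp add: last_take_Suc hd_drop_conv_nth)
  show "is_walk G (take (Suc p) ns) (take p ds)" "is_walk G (drop q ns) (drop q ds)"
    using is_walk_take[OF w] is_walk_drop[OF w] pq by auto
  show "d_connecting E C (take (Suc p) ns) (take p ds)" "d_connecting E C (drop q ns) (drop q ds)"
    using d_connecting_take[OF c w] d_connecting_drop[OF c w] pq by auto
  assume "take p ds \<noteq> []" "drop q ds \<noteq> []"
  then have p0: "0 < p" and ql: "q < length ds" using l by auto
  have last1: "last (take p ds) = ds ! (p - 1)" using p0 ql pq by (subst last_conv_nth) (auto simp: min_def)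
  have hd2: "hd (drop q ds) = ds ! q" "hd (drop q ns) = ns ! q" using ql pq by (auto simp: hd_drop_conv_nth)
  have p_int: "0 < p" "p < length ns - 1" and q_int: "0 < q" "q < length ns - 1" using p0 pq ql l by auto
  show "if last (take p ds) \<and> \<not> hd (drop q ds) then hd (drop q ns) \<in> anc E C \<union> C
    else hd (drop q ns) \<notin> C"
  proof (cases "ds ! (p - 1) \<and> \<not> ds ! q")
    case True
    then have "ns ! p \<in> anc E C \<union> C"
      using d_connectingD(2)[OF c p_int] d_connecting_forward_anc[OF w assms(2) c pq(1) ql]
      by (cases "ds ! p") (auto simp: is_collider_def)
    then show ?thesis using True last1 hd2 pq by simp
  next
    case False
    then have "\<not> is_collider ds p \<or> \<not> is_collider ds q" by (auto simp: is_collider_def)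
    then have "ns ! q \<notin> C" using d_connectingD(1)[OF c] p_int q_int pq by metis
    then show ?thesis using False last1 hd2 by auto
  qed
qed

lemma d_connecting_walk_to_path:
  assumes "is_walk G ns ds" "G \<subseteq> E" "d_connecting E C ns ds"
  shows "\<exists>ns' ds'. is_path G ns' ds' \<and> d_connecting E C ns' ds' \<and> hd ns' = hd ns \<and> last ns' = last ns"
  using assms
proof (induction "length ns" arbitrary: ns ds rule: less_induct)
  case less
  show ?case
  proof (cases "distinct ns")
    case True
    then show ?thesis using less.prems is_path_iff_walk_distinct by blast
  next
    case False
    then obtain p q where pq: "p < q" "q < length ns" "ns ! p = ns ! q"
      by (metis distinct_conv_nth linorder_neqE_nat)
    note w = less.prems(1) and l = is_walkD[OF less.prems(1)]
    let ?ns = "take (Suc p) ns @ tl (drop q ns)" and ?ds = "take p ds @ drop q ds"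
    have j: "last (take (Suc p) ns) = hd (drop q ns)" using pq by (simp add: last_take_Suc hd_drop_conv_nth)
    have "is_walk G ?ns ?ds"
      using is_walk_append[OF is_walk_take[OF w] is_walk_drop[OF w] j] pq by simp
    moreover have "d_connecting E C ?ns ?ds" using d_connecting_cut_loop[OF less.prems pq] .
    moreover have "length ?ns < length ns" using pq by auto
    moreover have "hd ?ns = hd ns" "last ?ns = last ns"
      using l pq last_append_tl[OF _ j] by (cases ns; auto)+
    ultimately show ?thesis using less.hyps[OF _ _ less.prems(2)] by metis
  qed
qed

lemma directed_walk_into:
  assumes "(v, b) \<in> E\<^sup>+" "b \<in> B" "v \<notin> B"
  shows "\<exists>ns. is_walk (del_out E B) ns (replicate (length ns - 1) True) \<and> hd ns = v \<and>
    last ns \<in> B \<and> 2 \<le> length ns \<and> (\<forall>x \<in> set ns. (v, x) \<in> E\<^sup>*)"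
  using assms
proof (induction v rule: converse_trancl_induct)
  case (base v)
  then show ?case by (intro exI[of _ "[v, b]"]) (auto simp: is_walk_def del_out_def)
next
  case (step v y)
  have e: "is_walk (del_out E B) [v, y] [True]" using step by (auto simp: is_walk_def del_out_def)
  show ?case
  proof (cases "y \<in> B")
    case True
    then show ?thesis using e step by (intro exI[of _ "[v, y]"]) auto
  next
    case False
    then obtain ns where ns: "is_walk (del_out E B) ns (replicate (length ns - 1) True)" "hd ns = y"
      "last ns \<in> B" "2 \<le> length ns" "\<forall>x \<in> set ns. (y, x) \<in> E\<^sup>*"
      using step by blast
    have "[v, y] @ tl ns = v # ns" "[True] @ replicate (length ns - 1) True = replicate (length ns) True"
      using ns(2,4) by (cases ns; auto)+
    then have "is_walk (del_out E B) (v # ns) (replicate (length (v # ns) - 1) True)"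
      using is_walk_append[OF e ns(1)] ns(2) by simp
    moreover have "\<forall>x \<in> set (v # ns). (v, x) \<in> E\<^sup>*"
      using ns(5) step(1) by (auto intro: converse_rtrancl_into_rtrancl)
    ultimately show ?thesis using ns by (intro exI[of _ "v # ns"]) auto
  qed
qed

lemma d_connecting_append_directed:
  assumes w: "is_walk G ns ds" and w2: "is_walk G ns2 (replicate (length ns2 - 1) True)"
    and j: "last ns = hd ns2" and c: "d_connecting E C ns ds" and "last ns \<notin> anc E C \<union> C"
    and reach: "\<forall>x \<in> set ns2. (hd ns2, x) \<in> E\<^sup>*"
  shows "d_connecting E C (ns @ tl ns2) (ds @ replicate (length ns2 - 1) True)"
proof (rule d_connecting_append[OF w w2 j c])
  have "x \<notin> C" if "x \<in> set ns2" for x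
    using anc_Un_rtrancl_closed[of "hd ns2" x E C] reach that assms(5) j by auto
  then show "d_connecting E C ns2 (replicate (length ns2 - 1) True)"
    by (auto simp: d_connecting_def is_collider_def)
  show "if last ds \<and> \<not> hd (replicate (length ns2 - 1) True) then hd ns2 \<in> anc E C \<union> C
      else hd ns2 \<notin> C" if "replicate (length ns2 - 1) True \<noteq> []"
    using that assms(5) j by (cases "length ns2 - 1") auto
qed

lemma anc_Un: "anc E (B \<union> C) = anc E B \<union> anc E C"
  by (auto simp: anc_def)

lemma d_connecting_take_Un:
  assumes c: "d_connecting E (B \<union> C) ns ds" and w: "is_walk G ns ds" and "k < length ns"
    and colliders: "\<And>j. 0 < j \<Longrightarrow> j < k \<Longrightarrow> is_collider ds j \<Longrightarrow> ns ! j \<in> anc E C \<union> C"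
  shows "d_connecting E C (take (Suc k) ns) (take k ds)"
  unfolding d_connecting_def
proof (intro allI impI)
  have c': "d_connecting E (B \<union> C) (take (Suc k) ns) (take k ds)" using d_connecting_take[OF c w \<open>k < length ns\<close>] .
  fix j assume j: "0 < j \<and> j < length (take (Suc k) ns) - 1"
  then have "j < k" by auto
  then have "is_collider (take k ds) j = is_collider ds j" "take (Suc k) ns ! j = ns ! j"
    using j by (auto simp: is_collider_def)
  then show "(\<not> is_collider (take k ds) j \<longrightarrow> take (Suc k) ns ! j \<notin> C) \<and>
      (is_collider (take k ds) j \<longrightarrow> take (Suc k) ns ! j \<in> anc E C \<union> C)"
    using d_connectingD(1)[OF c'] colliders[of j] j \<open>j < k\<close> by auto
qed

text \<open>Stop at the first node that is in B or is a collider outside anc C \<union> C. In the second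
  case it is an ancestor of B, and a directed path in D^B from it into B keeps the walk open.\<close>
lemma reroute_d_connecting_walk:
  assumes w: "is_walk (del_out E B) ns ds" and c: "d_connecting E (B \<union> C) ns ds"
    and h: "hd ns \<in> A" and l: "last ns \<in> B" and AB: "A \<inter> B = {}"
  shows "\<exists>ns' ds'. is_walk (del_out E B) ns' ds' \<and> d_connecting E C ns' ds' \<and> hd ns' \<in> A \<and> last ns' \<in> B"
proof -
  note len = is_walkD[OF w]
  define P where "P k \<longleftrightarrow> 0 < k \<and> k < length ns \<and>
    (ns ! k \<in> B \<or> (k < length ns - 1 \<and> is_collider ds k \<and> ns ! k \<notin> anc E C \<union> C))" for k
  have "length ns \<noteq> 1" using h l AB len by (cases ns) auto
  then have "1 < length ns" using len(1) by (cases ns) auto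
  then have "P (length ns - 1)" using l len by (auto simp: P_def last_conv_nth)
  define k where "k = (LEAST k. P k)"
  have Pk: "P k" using LeastI[of P] \<open>P (length ns - 1)\<close> k_def by simp
  then have k0: "0 < k" and kl: "k < length ns" by (auto simp: P_def)
  have prefix_walk: "is_walk (del_out E B) (take (Suc k) ns) (take k ds)" using is_walk_take[OF w kl] .
  have prefix_hd: "hd (take (Suc k) ns) \<in> A" using h len by (cases ns) auto
  have prefix_last: "last (take (Suc k) ns) = ns ! k" using kl by (rule last_take_Suc)
  have "is_collider ds j \<Longrightarrow> ns ! j \<in> anc E C \<union> C" if "0 < j" "j < k" for j
    using not_less_Least[of j P] that kl k_def by (auto simp: P_def)
  then have prefix_open: "d_connecting E C (take (Suc k) ns) (take k ds)"
    using d_connecting_take_Un[OF c w kl] by blast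
  show ?thesis
  proof (cases "ns ! k \<in> B")
    case True
    then show ?thesis using prefix_walk prefix_open prefix_hd prefix_last by metis
  next
    case False
    then have "k < length ns - 1" and "is_collider ds k" and not_anc: "ns ! k \<notin> anc E C \<union> C"
      using Pk by (auto simp: P_def)
    then have "ns ! k \<in> anc E B" using d_connectingD(2)[OF c k0] False by (auto simp: anc_Un)
    then obtain b where "b \<in> B" "(ns ! k, b) \<in> E\<^sup>+" by (auto simp: anc_def)
    then obtain ns2 where ns2: "is_walk (del_out E B) ns2 (replicate (length ns2 - 1) True)"
      "hd ns2 = ns ! k" "last ns2 \<in> B" "2 \<le> length ns2" "\<forall>x \<in> set ns2. (ns ! k, x) \<in> E\<^sup>*"
      using directed_walk_into False by metis
    have j: "last (take (Suc k) ns) = hd ns2" using prefix_last ns2(2) by simp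
    have "is_walk (del_out E B) (take (Suc k) ns @ tl ns2) (take k ds @ replicate (length ns2 - 1) True)"
      using is_walk_append[OF prefix_walk ns2(1) j] .
    moreover have "d_connecting E C (take (Suc k) ns @ tl ns2) (take k ds @ replicate (length ns2 - 1) True)"
      using d_connecting_append_directed[OF prefix_walk ns2(1) j prefix_open] prefix_last not_anc ns2(2,5)
      by simp
    moreover have "hd (take (Suc k) ns @ tl ns2) \<in> A" using prefix_hd kl by (cases ns) auto
    moreover have "last (take (Suc k) ns @ tl ns2) \<in> B" using last_append_tl[OF _ j] ns2(3,4) by force
    ultimately show ?thesis by blast
  qed
qed

lemma delta_sep_no_d_connecting_walk:
  assumes "delta_sep E A B C" "A \<inter> B = {}"
    and "is_walk (del_out E B) ns ds" "d_connecting E (B \<union> C) ns ds" "hd ns \<in> A" "last ns \<in> B"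
  shows False
proof -
  obtain ns' ds' where ns': "is_walk (del_out E B) ns' ds'" "d_connecting E C ns' ds'"
    "hd ns' \<in> A" "last ns' \<in> B"
    using reroute_d_connecting_walk assms(2-) by metis
  obtain ns'' ds'' where "is_path (del_out E B) ns'' ds''" "d_connecting E C ns'' ds''"
    "hd ns'' = hd ns'" "last ns'' = last ns'"
    using d_connecting_walk_to_path[OF ns'(1) _ ns'(2)] by (auto simp: del_out_def)
  then show False using assms(1) ns' by (auto simp: delta_sep_def blocked_iff_not_d_connecting)
qed

lemma trancl_snd_less:
  fixes G :: "(('a \<times> nat) \<times> ('a \<times> nat)) set"
  assumes "(x, y) \<in> G\<^sup>+" "\<And>u v. (u, v) \<in> G \<Longrightarrow> snd u < snd v"
  shows "snd x < snd y"
  using assms(1)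
proof induction
  case (step y z)
  then show ?case using assms(2)[of y z] by linarith
qed (use assms(2) in blast)

lemma is_walk_nodes_subset:
  assumes w: "is_walk G ns ds" and "G \<subseteq> N \<times> N" "2 \<le> length ns"
  shows "set ns \<subseteq> N"
proof
  note l = is_walkD[OF w]
  fix x assume "x \<in> set ns"
  then obtain j where j: "j < length ns" "x = ns ! j" by (metis in_set_conv_nth)
  show "x \<in> N"
  proof (cases "j < length ds")
    case True
    then show ?thesis using is_walk_edge[OF w True] assms(2) j by (auto split: if_splits)
  next
    case False
    then have "j - 1 < length ds" "Suc (j - 1) = j" using j l assms(3) by auto
    then show ?thesis using is_walk_edge[OF w, of "j - 1"] assms(2) j by (auto split: if_splits)
  qed
qed

text \<open>A node of maximal time at or after t would be a collider, hence an ancestor of a node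
  before t, which is impossible as edges go forward in time.\<close>
lemma d_connecting_times_below:
  fixes G :: "(('a \<times> nat) \<times> ('a \<times> nat)) set"
  assumes w: "is_walk G ns ds" and time: "\<And>u v. (u, v) \<in> G \<Longrightarrow> snd u < snd v"
    and c: "d_connecting G S ns ds" and S: "\<And>x. x \<in> S \<Longrightarrow> snd x < t"
    and "snd (hd ns) < t" "snd (last ns) \<le> t" and j: "j < length ns - 1"
  shows "snd (ns ! j) < t"
proof -
  note l = is_walkD[OF w]
  let ?T = "(\<lambda>i. snd (ns ! i)) ` {..<length ns - 1}"
  define m where "m = Max ?T"
  have fin: "finite ?T" and ne: "?T \<noteq> {}" using j by auto
  obtain k where k: "k < length ns - 1" "snd (ns ! k) = m" using Max_in[OF fin ne] m_def by auto
  have bound: "snd (ns ! i) \<le> m" if "i < length ns - 1" for i using Max_ge[OF fin] that m_def by auto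
  have edge_time: "if ds ! i then snd (ns ! i) < snd (ns ! Suc i) else snd (ns ! Suc i) < snd (ns ! i)"
    if "i < length ds" for i
    using is_walk_edge[OF w that] by (cases "ds ! i") (simp_all add: time)
  have "m < t"
  proof (rule ccontr)
    assume mt: "\<not> m < t"
    have k0: "0 < k" using k mt assms(5) l by (cases k) (auto simp: hd_conv_nth)
    have "snd (ns ! Suc k) \<le> m"
    proof (cases "Suc k < length ns - 1")
      case False
      then have "Suc k = length ns - 1" using k by simp
      then show ?thesis using assms(6) mt l by (simp add: last_conv_nth)
    qed (rule bound)
    moreover have "k < length ds" using k l by simp
    ultimately have "\<not> ds ! k" using edge_time[of k] k(2) by (cases "ds ! k") simp_all
    moreover have "ds ! (k - 1)"
    proof (rule ccontr)
      assume "\<not> ds ! (k - 1)"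
      moreover have "k - 1 < length ds" "Suc (k - 1) = k" using k k0 l by auto
      ultimately have "snd (ns ! k) < snd (ns ! (k - 1))" using edge_time[of "k - 1"] by simp
      moreover have "k - 1 < length ns - 1" using k by linarith
      ultimately show False using bound[of "k - 1"] k by simp
    qed
    ultimately have "is_collider ds k" by (simp add: is_collider_def)
    then have "ns ! k \<in> anc G S \<union> S" using d_connectingD(2)[OF c k0 k(1)] by simp
    then consider "ns ! k \<in> S" | x where "x \<in> S" "(ns ! k, x) \<in> G\<^sup>+" by (auto simp: anc_def)
    then have "snd (ns ! k) < t"
    proof cases
      case (2 x)
      then show ?thesis using S[of x] trancl_snd_less[OF 2(2) time] by linarith
    qed (rule S)
    then show False using k mt by simp
  qed
  then show ?thesis using bound[OF j] by simp
qed

lemma is_walk_del_out_d_connecting: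
  assumes w: "is_walk E ns ds" and c: "d_connecting E (B \<union> C) ns ds"
    and "hd ns \<notin> B" "ds \<noteq> []" "last ds"
  shows "is_walk (del_out E B) ns ds"
proof (rule is_walk_del_out[OF w])
  note l = is_walkD[OF w]
  fix k assume k: "k < length ds"
  show "ns ! k \<notin> B" if "ds ! k"
  proof (cases k)
    case 0
    then show ?thesis using assms(3) l by (simp add: hd_conv_nth)
  next
    case (Suc i)
    then have "\<not> is_collider ds k" using that by (simp add: is_collider_def)
    then show ?thesis using d_connectingD(1)[OF c] Suc k l by auto
  qed
  show "ns ! Suc k \<notin> B" if "\<not> ds ! k"
  proof -
    have "k \<noteq> length ds - 1" using that assms(4,5) by (auto simp: last_conv_nth)
    then have "Suc k < length ds" using k by simp
    moreover have "\<not> is_collider ds (Suc k)" using that by (simp add: is_collider_def)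
    ultimately show ?thesis using d_connectingD(1)[OF c] l by auto
  qed
qed

lemma d_connecting_map_fst:
  assumes proj: "\<And>x y. (x, y) \<in> Et \<Longrightarrow> (fst x, fst y) \<in> E"
    and c: "d_connecting Et (past_nodes V W (B \<union> C) s) ns ds"
    and past: "\<And>j. j < length ns - 1 \<Longrightarrow> ns ! j \<in> unrolled_nodes V W s"
  shows "d_connecting E (B \<union> C) (map fst ns) ds"
  unfolding d_connecting_def
proof (intro allI impI)
  let ?c = "past_nodes V W (B \<union> C) s"
  fix j assume j: "0 < j \<and> j < length (map fst ns) - 1"
  then have j0: "0 < j" and jl: "j < length ns - 1" by auto
  have "fst (ns ! j) \<notin> B \<union> C" if "\<not> is_collider ds j"
    using d_connectingD(1)[OF c j0 jl that] past[OF jl] by (cases "ns ! j") (auto simp: past_nodes_def)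
  moreover have "fst (ns ! j) \<in> anc E (B \<union> C) \<union> (B \<union> C)" if "is_collider ds j"
  proof -
    have "ns ! j \<in> anc Et ?c \<union> ?c" using d_connectingD(2)[OF c j0 jl that] .
    then consider "ns ! j \<in> ?c" | x where "x \<in> ?c" "(ns ! j, x) \<in> Et\<^sup>+" by (auto simp: anc_def)
    then show ?thesis
    proof cases
      case (2 x)
      then have "(fst (ns ! j), fst x) \<in> E\<^sup>+" "fst x \<in> B \<union> C"
        using trancl_image[of _ _ Et fst E] proj by (auto simp: past_nodes_def)
      then show ?thesis by (cases "fst (ns ! j) = fst x") (auto simp: anc_def)
    qed (auto simp: past_nodes_def)
  qed
  ultimately show "(\<not> is_collider ds j \<longrightarrow> map fst ns ! j \<notin> B \<union> C) \<and>
      (is_collider ds j \<longrightarrow> map fst ns ! j \<in> anc E (B \<union> C) \<union> (B \<union> C))"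
    using jl by auto
qed

lemma unrolled_no_d_connecting_walk:
  fixes Et :: "(('v \<times> nat) \<times> ('v \<times> nat)) set"
  assumes nodes: "Et \<subseteq> unrolled_nodes V W t' \<times> unrolled_nodes V W t'"
    and time: "\<And>x y. (x, y) \<in> Et \<Longrightarrow> snd x < snd y"
    and proj: "\<And>x y. (x, y) \<in> Et \<Longrightarrow> (fst x, fst y) \<in> E"
    and AB: "A \<inter> B = {}" and dsep: "delta_sep E A B C" and "1 \<le> t"
    and w: "is_walk Et ns ds" and c: "d_connecting Et (past_nodes V W (B \<union> C) (t - 1)) ns ds"
    and h: "hd ns \<in> past_nodes V W A (t - 1)" and l: "last ns \<in> now_nodes B t"
  shows False
proof -
  note len = is_walkD[OF w]
  have hd_time: "snd (hd ns) < t" and "fst (hd ns) \<in> A"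
    using h \<open>1 \<le> t\<close> by (auto simp: past_nodes_def unrolled_nodes_def)
  have last_time: "snd (last ns) = t" and "fst (last ns) \<in> B" using l by (auto simp: now_nodes_def)
  have two: "2 \<le> length ns" using hd_time last_time len by (cases ns; cases "tl ns") auto
  have c_time: "snd x < t" if "x \<in> past_nodes V W (B \<union> C) (t - 1)" for x
    using that \<open>1 \<le> t\<close> by (cases x) (auto simp: past_nodes_def unrolled_nodes_def)
  have before: "snd (ns ! j) < t" if "j < length ns - 1" for j
    using d_connecting_times_below[OF w time c c_time hd_time _ that] last_time by simp
  have past: "ns ! j \<in> unrolled_nodes V W (t - 1)" if "j < length ns - 1" for j
  proof -
    have "ns ! j \<in> unrolled_nodes V W t'" using is_walk_nodes_subset[OF w nodes two] that by auto
    then show ?thesis using before[OF that] by (cases "ns ! j") (auto simp: unrolled_nodes_def)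
  qed
  have ds_ne: "ds \<noteq> []" using two len by auto
  have last_edge: "last ds"
  proof (rule ccontr)
    have i: "length ns - 2 < length ds" and "Suc (length ns - 2) = length ns - 1"
      and "last ds = ds ! (length ns - 2)" using two len ds_ne by (auto simp: last_conv_nth numeral_2_eq_2)
    moreover assume "\<not> last ds"
    ultimately have "(last ns, ns ! (length ns - 2)) \<in> Et"
      using is_walk_edge[OF w i] len by (simp add: last_conv_nth)
    then show False using time before[of "length ns - 2"] last_time two by fastforce
  qed
  have c_proj: "d_connecting E (B \<union> C) (map fst ns) ds" using d_connecting_map_fst[OF proj c past] by simp
  moreover have "is_walk (del_out E B) (map fst ns) ds"
    using is_walk_del_out_d_connecting[OF is_walk_map[OF w proj] c_proj] \<open>fst (hd ns) \<in> A\<close> AB len ds_ne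
      last_edge by (auto simp: hd_map)
  moreover have "hd (map fst ns) \<in> A" "last (map fst ns) \<in> B"
    using \<open>fst (hd ns) \<in> A\<close> \<open>fst (last ns) \<in> B\<close> len by (simp_all add: hd_map last_map)
  ultimately show False using delta_sep_no_d_connecting_walk[OF dsep AB] by blast
qed

lemma d_sep_past_now:
  fixes Et :: "(('v \<times> nat) \<times> ('v \<times> nat)) set"
  assumes "Et \<subseteq> unrolled_nodes V W t' \<times> unrolled_nodes V W t'"
    and "\<And>x y. (x, y) \<in> Et \<Longrightarrow> snd x < snd y"
    and "\<And>x y. (x, y) \<in> Et \<Longrightarrow> (fst x, fst y) \<in> E"
    and "A \<inter> B = {}" and "delta_sep E A B C" and "1 \<le> t"
  shows "d_sep Et (past_nodes V W A (t - 1)) (now_nodes B t) (past_nodes V W (B \<union> C) (t - 1))"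
  unfolding d_sep_def blocked_iff_not_d_connecting
proof (intro allI impI)
  let ?a = "past_nodes V W A (t - 1)" and ?b = "now_nodes B t" and ?c = "past_nodes V W (B \<union> C) (t - 1)"
  have no_walk: "\<not> d_connecting Et ?c ns ds" if "is_walk Et ns ds" "hd ns \<in> ?a" "last ns \<in> ?b" for ns ds
    using unrolled_no_d_connecting_walk[of Et V W t' E A B C t ns ds] assms that by blast
  fix ns ds
  assume "is_path Et ns ds \<and> (hd ns \<in> ?a \<and> last ns \<in> ?b \<or> hd ns \<in> ?b \<and> last ns \<in> ?a)"
  then have w: "is_walk Et ns ds" and ends: "hd ns \<in> ?a \<and> last ns \<in> ?b \<or> hd ns \<in> ?b \<and> last ns \<in> ?a"
    by (auto simp: is_path_iff_walk_distinct)
  have "hd (rev ns) = last ns" "last (rev ns) = hd ns" using is_walkD(1)[OF w] by (auto simp: hd_rev last_rev)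
  then show "\<not> d_connecting Et ?c ns ds"
    using ends no_walk[OF w] no_walk[OF is_walk_rev[OF w]] d_connecting_rev[OF w] by auto
qed

lemma proper_pair_edges:
  assumes "proper_pair V W t' E Et" "no_contemporaneous Et"
  shows "Et \<subseteq> unrolled_nodes V W t' \<times> unrolled_nodes V W t'"
    and "\<And>x y. (x, y) \<in> Et \<Longrightarrow> snd x < snd y"
    and "\<And>x y. (x, y) \<in> Et \<Longrightarrow> (fst x, fst y) \<in> E"
proof -
  have dag: "is_unrolled_DAG V W t' Et" and rolled: "E = roll Et \<or> Et = unroll V W t' E"
    using assms(1) by (auto simp: proper_pair_def)
  then show "Et \<subseteq> unrolled_nodes V W t' \<times> unrolled_nodes V W t'" by (simp add: is_unrolled_DAG_def)
  show time: "snd x < snd y" if "(x, y) \<in> Et" for x y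
  proof -
    obtain i s j u where xy: "x = (i, s)" "y = (j, u)" by (cases x, cases y)
    then have "s \<le> u" "s \<noteq> u"
      using that dag assms(2) by (auto simp: is_unrolled_DAG_def no_contemporaneous_def)
    then show ?thesis using xy by simp
  qed
  show "(fst x, fst y) \<in> E" if "(x, y) \<in> Et" for x y
    using rolled that time[OF that] by (cases x; cases y) (auto simp: roll_def unroll_def)
qed

theorem proposition1:
  fixes M :: "'a measure" and V W :: "'v set" and X :: "'v \<Rightarrow> nat \<Rightarrow> 'a \<Rightarrow> real"
    and t' :: nat and E :: "('v \<times> 'v) set" and Et :: "(('v \<times> nat) \<times> ('v \<times> nat)) set"
    and A B C :: "'v set"
  assumes "time_series M V W X"
    and "t' \<ge> 1"
    and "proper_pair V W t' E Et"
    and "no_contemporaneous Et"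
    and "dsep_markov M V W t' X Et"
    and "A \<subseteq> V \<union> W" and "B \<subseteq> V" and "C \<subseteq> V \<union> W"
    and "A \<inter> B = {}" and "A \<inter> C = {}" and "B \<inter> C = {}"
    and "delta_sep E A B C"
  shows "locally_indep M V W X A B C t'"
  unfolding locally_indep_def
proof
  fix t assume t: "t \<in> {1..t'}"
  let ?a = "past_nodes V W A (t - 1)" and ?b = "now_nodes B t" and ?c = "past_nodes V W (B \<union> C) (t - 1)"
  have "d_sep Et ?a ?b ?c"
    using d_sep_past_now[OF proper_pair_edges[OF assms(3,4)] assms(9,12)] t by simp
  moreover have "?a \<subseteq> unrolled_nodes V W t'" "?b \<subseteq> unrolled_nodes V W t'" "?c \<subseteq> unrolled_nodes V W t'"
    using t assms(7) by (auto simp: past_nodes_def now_nodes_def unrolled_nodes_def)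
  moreover have "?a \<inter> ?b = {}" "?a \<inter> ?c = {}" "?b \<inter> ?c = {}"
    using t assms(9,10) by (auto simp: past_nodes_def now_nodes_def unrolled_nodes_def)
  ultimately show "cond_indep M (node_var X) ?a ?b ?c"
    using assms(5) unfolding dsep_markov_def by blast
qed

end
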